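(* Let $\phi\colon\mathbb{N}\to(0,\infty)$ be an arbitrary function and let $$R(\phi)=\{x\in\mathbb{I}\colon R_n(x)\ge\phi(n)\text{ for infinitely many }n\}.$$ Then $\mathcal{L}(R(\phi))=1$ if $\sum_{n=1}^\infty\frac{1}{\phi(n)}=\infty$, and $\mathcal{L}(R(\phi))=0$ if $\sum_{n=1}^\infty\frac{1}{\phi(n)}<\infty$.
   Context: $\mathcal{L}$ is Lebesgue measure on $(0,1)$, $\mathbb{I}=(0,1)\setminus\mathbb{Q}$. Signed Engel expansion: define $T\colon[0,1)\to[0,1)$ by: for $k\in\mathbb{N}$, $Tx=\lceil 1/x\rceil x-1$ if $x\in(\frac{1}{2k},\frac{1}{2k-1})$; $Tx=1-\lfloor 1/x\rfloor x$ if $x\in(\frac{1}{2k+1},\frac{1}{2k})$; $Tx=0$ if $x\in\{0\}\cup\{1/n\colon n\ge 2\}$. For $x\in(0,1)$, $d_1(x)=\lceil 1/x\rceil$ if $x\in[\frac{1}{2k},\frac{1}{2k-1})$ for some $k\in\mathbb{N}$, and $d_1(x)=\lfloor 1/x\rfloor$ if $x\in[\frac{1}{2k+1},\frac{1}{2k})$ for some $k\in\mathbb{N}$; $d_{n+1}(x)=d_1(T^nx)$ (defined for all $n$ when $x$ is irrational). For $x\in\mathbb{I}$, $R_1(x)=d_1(x)$ and $R_n(x)=d_n(x)/d_{n-1}(x)$ for $n\ge2$. *)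

theory Defs
  imports "HOL-Analysis.Analysis"
begin

definition sengel_T :: "real \<Rightarrow> real" where
  "sengel_T x =
     (if \<exists>k::nat. k \<ge> 1 \<and> x \<in> {1 / real (2*k) <..< 1 / real (2*k - 1)}
      then real_of_int (ceiling (1 / x)) * x - 1
      else if \<exists>k::nat. k \<ge> 1 \<and> x \<in> {1 / real (2*k+1) <..< 1 / real (2*k)}
      then 1 - real_of_int (floor (1 / x)) * x
      else 0)"

definition sengel_d1 :: "real \<Rightarrow> int" where
  "sengel_d1 x =
     (if \<exists>k::nat. k \<ge> 1 \<and> x \<in> {1 / real (2*k) ..< 1 / real (2*k - 1)}
      then ceiling (1 / x) else floor (1 / x))"

definition sengel_d :: "nat \<Rightarrow> real \<Rightarrow> int" where
  "sengel_d n x = sengel_d1 ((sengel_T ^^ (n - 1)) x)"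

definition sengel_R :: "nat \<Rightarrow> real \<Rightarrow> real" where
  "sengel_R n x =
     (if n \<le> 1 then real_of_int (sengel_d 1 x)
      else real_of_int (sengel_d n x) / real_of_int (sengel_d (n - 1) x))"

definition sengel_Rset :: "(nat \<Rightarrow> real) \<Rightarrow> real set" where
  "sengel_Rset phi = {x \<in> {0<..<1} - \<rat>. infinite {n. n \<ge> 1 \<and> sengel_R n x \<ge> phi n}}"

end

theory Submission
  imports Defs
begin

text \<open>
  Every signed Engel digit is even. Write Omega a for the irrationals in (0, 1/(2a - 1)); these are
  exactly the points of the irrationals in (0, 1) whose first digit is at least 2a. A point with
  first digit 2m lies either in (1/(2m), 1/(2m - 1)), which T x = 2mx - 1 maps affinely onto
  Omega m, or in (1/(2m + 1), 1/(2m)), which T x = 1 - 2mx maps affinely onto Omega (m + 1).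
  Hence a set filling at most the fraction c of both Omega m and Omega (m + 1) pulls back under T
  to at most the fraction c of the cylinder where the first digit is 2m.

  On Omega a, entered after a digit d, the next digit is at least p d on a fraction at most 4/p
  of Omega a, and below p d on a fraction at most 1 - min 1 (1/p) / 4. Inducting along the orbit,
  the set where R_n >= phi n has measure at most 4 / phi n, so Borel-Cantelli settles the
  convergent case; and the set where R_n < phi n for all N <= n < j has measure at most the
  product of the factors 1 - min 1 (1 / phi n) / 4, which tends to 0 when the series diverges.
\<close>

lemma real_of_nat_odd: "1 \<le> k \<Longrightarrow> real (2 * k - 1) = 2 * real k - 1"
  by (simp add: of_nat_diff)

lemma reciprocal_bounds_iff:
  fixes y lo hi :: real
  assumes "0 < y" "0 < lo" "0 < hi"
  shows "1 / hi < y \<and> y < 1 / lo \<longleftrightarrow> lo < 1 / y \<and> 1 / y < hi"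
  using assms by (auto simp: field_simps)

lemma Rats_affine_iff:
  fixes c t y :: real
  assumes "c \<in> \<rat>" "t \<in> \<rat>" "c \<noteq> 0"
  shows "t + c * y \<in> \<rat> \<longleftrightarrow> y \<in> \<rat>"
proof
  assume "t + c * y \<in> \<rat>"
  then have "(t + c * y - t) / c \<in> \<rat>"
    using assms by (intro Rats_divide Rats_diff) auto
  then show "y \<in> \<rat>"
    using assms by simp
qed (use assms in auto)

lemma Rats_null_set: "(\<rat> :: real set) \<in> null_sets lborel"
  by (rule countable_imp_null_set_lborel) (rule countable_rat)

lemma borel_imp_sets_lebesgue: "A \<in> sets borel \<Longrightarrow> A \<in> sets lebesgue"
  by simp

lemma emeasure_lebesgue_Ioo: "emeasure lebesgue {l<..<u::real} = ennreal (u - l)"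
  by (cases "l \<le> u") (simp_all add: ennreal_neg)

lemma emeasure_lebesgue_affine_vimage:
  fixes c t :: real
  assumes "c \<noteq> 0"
  shows "emeasure lebesgue ((\<lambda>x. t + c * x) -` S) = ennreal (1 / \<bar>c\<bar>) * emeasure lebesgue S"
proof -
  have "(\<lambda>x. t + c * x) -` S = (\<lambda>x. (1 / c) *\<^sub>R x + (- t / c)) ` S"
    using assms by (auto simp: field_simps image_iff intro!: exI[of _ "t + c * _"])
  then show ?thesis
    using emeasure_lebesgue_affine[of "1 / c" "- t / c" S] by simp
qed

lemma emeasure_le_mult_by_partition:
  fixes M :: "'a measure" and P :: "nat \<Rightarrow> 'a set" and c :: ennreal
  assumes P: "disjoint_family P" and cover: "A \<subseteq> (\<Union>m. P m)" "B \<subseteq> (\<Union>m. P m)"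
    and sets: "\<And>m. A \<inter> P m \<in> sets M" "\<And>m. B \<inter> P m \<in> sets M"
    and le: "\<And>m. emeasure M (A \<inter> P m) \<le> emeasure M (B \<inter> P m) * c"
  shows "emeasure M A \<le> emeasure M B * c"
proof -
  have split: "emeasure M X = (\<Sum>m. emeasure M (X \<inter> P m))"
    if "X \<subseteq> (\<Union>m. P m)" "\<And>m. X \<inter> P m \<in> sets M" for X
  proof -
    have "disjoint_family (\<lambda>m. X \<inter> P m)"
      using P by (auto simp: disjoint_family_on_def)
    then have "(\<Sum>m. emeasure M (X \<inter> P m)) = emeasure M (\<Union>m. X \<inter> P m)"
      using that(2) by (intro suminf_emeasure) auto
    also have "(\<Union>m. X \<inter> P m) = X"
      using that(1) by blast
    finally show ?thesis ..
  qed
  have "emeasure M A = (\<Sum>m. emeasure M (A \<inter> P m))"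
    using cover(1) sets(1) by (rule split)
  also have "\<dots> \<le> (\<Sum>m. emeasure M (B \<inter> P m) * c)"
    by (rule suminf_le[OF le summableI summableI])
  also have "\<dots> = emeasure M B * c"
    using split[OF cover(2) sets(2)] by simp
  finally show ?thesis .
qed

lemma mem_limsup_iff_infinite: "x \<in> limsup A \<longleftrightarrow> infinite {n. x \<in> A n}"
  using mem_limsup_iff[of x A] frequently_cofinite[of "\<lambda>n. x \<in> A n"]
  by (simp add: cofinite_eq_sequentially)

lemma summable_min_1_iff:
  fixes f :: "nat \<Rightarrow> real"
  assumes "\<And>n. 0 \<le> f n"
  shows "summable (\<lambda>n. min 1 (f n)) \<longleftrightarrow> summable f"
proof
  assume sum: "summable (\<lambda>n. min 1 (f n))"
  then have "(\<lambda>n. min 1 (f n)) \<longlonglongrightarrow> 0"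
    by (rule summable_LIMSEQ_zero)
  then have "eventually (\<lambda>n. min 1 (f n) < 1) sequentially"
    by (rule order_tendstoD) simp
  then have "eventually (\<lambda>n. min 1 (f n) = f n) sequentially"
    by (rule eventually_mono) (simp add: min_def split: if_splits)
  then have "summable (\<lambda>n. min 1 (f n)) = summable f"
    by (rule summable_cong)
  with sum show "summable f"
    by (simp only:)
next
  assume "summable f"
  then show "summable (\<lambda>n. min 1 (f n))"
    by (rule summable_comparison_test') (use assms in simp)
qed

lemma exists_prod_one_minus_less:
  fixes r :: "nat \<Rightarrow> real"
  assumes r: "\<And>n. 0 \<le> r n" "\<And>n. r n \<le> 1" and not_sum: "\<not> summable r" and e: "e > 0"
  shows "\<exists>j. (\<Prod>n<j. 1 - r n) < e"
proof -
  obtain j where j: "- ln e < (\<Sum>n<j. r n)"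
    using not_sum summableI_nonneg_bounded[of r "- ln e"] r(1) by (meson not_le)
  have "(\<Prod>n<j. 1 - r n) \<le> (\<Prod>n<j. exp (- r n))"
  proof (rule prod_mono)
    fix n
    show "0 \<le> 1 - r n \<and> 1 - r n \<le> exp (- r n)"
      using r(2)[of n] exp_ge_add_one_self[of "- r n"] by simp
  qed
  also have "\<dots> = exp (- (\<Sum>n<j. r n))"
    by (simp add: exp_sum[symmetric] sum_negf)
  also have "\<dots> < exp (ln e)"
    using j by simp
  also have "\<dots> = e"
    using e by simp
  finally show ?thesis ..
qed

section \<open>The branches of the signed Engel map\<close>

definition Omega :: "nat \<Rightarrow> real set" where
  "Omega a = {0<..<1 / (2 * real a - 1)} - \<rat>"

definition plus_branch :: "nat \<Rightarrow> real set" where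
  "plus_branch m = {1 / (2 * real m) <..< 1 / (2 * real m - 1)} - \<rat>"

definition minus_branch :: "nat \<Rightarrow> real set" where
  "minus_branch m = {1 / (2 * real m + 1) <..< 1 / (2 * real m)} - \<rat>"

lemma Omega_antimono:
  assumes "1 \<le> a" "a \<le> b"
  shows "Omega b \<subseteq> Omega a"
proof -
  have "1 / (2 * real b - 1) \<le> 1 / (2 * real a - 1)"
    using assms by (intro divide_left_mono) auto
  then show ?thesis
    unfolding Omega_def by auto
qed

lemma plus_branch_iff:
  assumes "m \<ge> 1"
  shows "2 * real m * y - 1 \<in> Omega m \<longleftrightarrow> y \<in> plus_branch m"
proof -
  have m: "real m \<ge> 1" using assms by simp
  have "2 * real m * y - 1 < 1 / (2 * real m - 1) \<longleftrightarrow> (2 * real m * y - 1) * (2 * real m - 1) < 1"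
    using m by (simp add: less_divide_eq)
  also have "\<dots> \<longleftrightarrow> 2 * real m * (y * (2 * real m - 1) - 1) < 0"
    by (simp add: algebra_simps)
  also have "\<dots> \<longleftrightarrow> y < 1 / (2 * real m - 1)"
    using m by (simp add: mult_less_0_iff less_divide_eq)
  finally have upper: "2 * real m * y - 1 < 1 / (2 * real m - 1) \<longleftrightarrow> y < 1 / (2 * real m - 1)" .
  have lower: "0 < 2 * real m * y - 1 \<longleftrightarrow> 1 / (2 * real m) < y"
    using m by (simp add: field_simps)
  have "2 * real m * y - 1 \<in> \<rat> \<longleftrightarrow> y \<in> \<rat>"
    using Rats_affine_iff[of "2 * real m" "-1" y] m by simp
  with upper lower show ?thesis
    unfolding Omega_def plus_branch_def by auto
qed

lemma minus_branch_iff: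
  assumes "m \<ge> 1"
  shows "1 - 2 * real m * y \<in> Omega (Suc m) \<longleftrightarrow> y \<in> minus_branch m"
proof -
  have m: "real m \<ge> 1" using assms by simp
  have "1 - 2 * real m * y < 1 / (2 * real m + 1) \<longleftrightarrow> (1 - 2 * real m * y) * (2 * real m + 1) < 1"
    using m by (simp add: less_divide_eq)
  also have "\<dots> \<longleftrightarrow> 2 * real m * (1 - y * (2 * real m + 1)) < 0"
    by (simp add: algebra_simps)
  also have "\<dots> \<longleftrightarrow> 1 / (2 * real m + 1) < y"
    using m by (simp add: mult_less_0_iff divide_less_eq)
  finally have lower: "1 - 2 * real m * y < 1 / (2 * real m + 1) \<longleftrightarrow> 1 / (2 * real m + 1) < y" .
  have upper: "0 < 1 - 2 * real m * y \<longleftrightarrow> y < 1 / (2 * real m)"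
    using m by (simp add: field_simps)
  have "1 - 2 * real m * y \<in> \<rat> \<longleftrightarrow> y \<in> \<rat>"
    using Rats_affine_iff[of "- 2 * real m" 1 y] m by simp
  with upper lower show ?thesis
    unfolding Omega_def minus_branch_def by (auto simp: add.commute)
qed

lemma sengel_plus_branch:
  assumes m: "m \<ge> 1" and y: "y \<in> plus_branch m"
  shows "sengel_d1 y = 2 * int m" "sengel_T y = 2 * real m * y - 1"
proof -
  have bounds: "1 / (2 * real m) < y" "y < 1 / (2 * real m - 1)"
    using y by (auto simp: plus_branch_def)
  have "0 < 1 / (2 * real m)" using m by simp
  then have "0 < y" using bounds(1) by linarith
  then have "2 * real m - 1 < 1 / y" "1 / y < 2 * real m"
    using bounds m reciprocal_bounds_iff[of y "2 * real m - 1" "2 * real m"] by auto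
  then have ceil: "ceiling (1 / y) = 2 * int m"
    by (intro ceiling_unique) auto
  have "\<exists>k. k \<ge> 1 \<and> y \<in> {1 / real (2*k) <..< 1 / real (2*k - 1)}"
    using m bounds by (intro exI[of _ m]) (simp add: real_of_nat_odd)
  then show "sengel_T y = 2 * real m * y - 1"
    unfolding sengel_T_def using ceil by simp
  have "\<exists>k. k \<ge> 1 \<and> y \<in> {1 / real (2*k) ..< 1 / real (2*k - 1)}"
    using m bounds by (intro exI[of _ m]) (simp add: real_of_nat_odd)
  then show "sengel_d1 y = 2 * int m"
    unfolding sengel_d1_def using ceil by simp
qed

lemma sengel_minus_branch:
  assumes m: "m \<ge> 1" and y: "y \<in> minus_branch m"
  shows "sengel_d1 y = 2 * int m" "sengel_T y = 1 - 2 * real m * y"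
proof -
  have bounds: "1 / (2 * real m + 1) < y" "y < 1 / (2 * real m)"
    using y by (auto simp: minus_branch_def)
  have "0 < 1 / (2 * real m + 1)" by simp
  then have "0 < y" using bounds(1) by linarith
  then have w: "2 * real m < 1 / y" "1 / y < 2 * real m + 1"
    using bounds m reciprocal_bounds_iff[of y "2 * real m" "2 * real m + 1"] by auto
  then have floor: "floor (1 / y) = 2 * int m"
    by (intro floor_unique) auto
  have not_plus: "\<not> (\<exists>k. k \<ge> 1 \<and> y \<in> {1 / real (2*k) ..< 1 / real (2*k - 1)})"
  proof
    assume "\<exists>k. k \<ge> 1 \<and> y \<in> {1 / real (2*k) ..< 1 / real (2*k - 1)}"
    then obtain k where k: "k \<ge> 1" "1 / (2 * real k) \<le> y" "y < 1 / (2 * real k - 1)"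
      by (auto simp: real_of_nat_odd)
    then have "2 * real k - 1 < 1 / y" "1 / y \<le> 2 * real k"
      using \<open>0 < y\<close> by (auto simp: field_simps)
    with w have "real m < real k" "real k < real (Suc m)" by simp_all
    then show False by simp
  qed
  then have not_plus_open: "\<not> (\<exists>k. k \<ge> 1 \<and> y \<in> {1 / real (2*k) <..< 1 / real (2*k - 1)})"
    by auto
  have minus: "\<exists>k. k \<ge> 1 \<and> y \<in> {1 / real (2*k+1) <..< 1 / real (2*k)}"
    using m bounds by (intro exI[of _ m]) (simp add: add.commute)
  have "sengel_T y = 1 - real_of_int (floor (1 / y)) * y"
    unfolding sengel_T_def by (simp only: if_not_P[OF not_plus_open] if_P[OF minus])
  then show "sengel_T y = 1 - 2 * real m * y"
    using floor by simp
  have "sengel_d1 y = floor (1 / y)"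
    unfolding sengel_d1_def by (simp only: if_not_P[OF not_plus])
  then show "sengel_d1 y = 2 * int m"
    using floor by simp
qed

lemma Omega_1_cover:
  assumes y: "y \<in> Omega 1"
  obtains m where "m \<ge> 1" "y \<in> plus_branch m \<union> minus_branch m"
proof -
  have y01: "0 < y" "y < 1" "y \<notin> \<rat>"
    using y by (auto simp: Omega_def)
  define n where "n = floor (1 / y)"
  have "1 / y \<notin> \<rat>"
  proof
    assume "1 / y \<in> \<rat>"
    then have "1 / (1 / y) \<in> \<rat>" by (rule Rats_divide[OF Rats_1])
    then show False using y01 by simp
  qed
  then have "real_of_int n \<noteq> 1 / y"
    by (metis Rats_of_int)
  then have n: "real_of_int n < 1 / y" "1 / y < real_of_int n + 1"
    unfolding n_def by linarith+
  have "1 < 1 / y" using y01 by simp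
  then have "n \<ge> 1" unfolding n_def by (simp add: le_floor_iff)
  show thesis
  proof (cases "even n")
    case True
    then obtain b where "n = 2 * b" by (rule evenE)
    with \<open>n \<ge> 1\<close> have "n = 2 * int (nat b)" "nat b \<ge> 1" by simp_all
    then obtain m where m: "n = 2 * int m" "m \<ge> 1"
      by blast
    have "y \<in> minus_branch m"
      using n m y01 reciprocal_bounds_iff[of y "2 * real m" "2 * real m + 1"]
      by (auto simp: minus_branch_def)
    with m show thesis using that by blast
  next
    case False
    then obtain b where "n = 2 * b + 1" by (rule oddE)
    with \<open>n \<ge> 1\<close> have "n = 2 * int (nat (b + 1)) - 1" "nat (b + 1) \<ge> 1" by simp_all
    then obtain m where m: "n = 2 * int m - 1" "m \<ge> 1"
      by blast
    have "y \<in> plus_branch m"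
      using n m y01 reciprocal_bounds_iff[of y "2 * real m - 1" "2 * real m"]
      by (auto simp: plus_branch_def)
    with m show thesis using that by blast
  qed
qed

text \<open>\<open>digit n\<close> is the digit d_(n+1), shifted to start at index 0 and cast to the reals.\<close>

definition digit :: "nat \<Rightarrow> real \<Rightarrow> real" where
  "digit n y = real_of_int (sengel_d1 ((sengel_T ^^ n) y))"

lemma Omega_borel [measurable]: "Omega a \<in> sets borel"
  using Rats_null_set unfolding Omega_def null_sets_def by auto

lemma emeasure_Omega:
  assumes "a \<ge> 1"
  shows "emeasure lebesgue (Omega a) = ennreal (1 / (2 * real a - 1))"
proof -
  have "emeasure lebesgue (Omega a) = emeasure lborel (Omega a)"
    by simp
  also have "\<dots> = emeasure lborel {0<..<1 / (2 * real a - 1)}"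
    unfolding Omega_def by (rule emeasure_Diff_null_set[OF Rats_null_set]) simp
  finally show ?thesis
    using assms by simp
qed

lemma emeasure_Omega_1: "emeasure lebesgue (Omega 1) = 1"
  using emeasure_Omega[of 1] by simp

lemma branch_bounds:
  assumes "y \<in> plus_branch m \<union> minus_branch m" "m \<ge> 1"
  shows "0 < y" "1 / (2 * real m + 1) < y" "y < 1 / (2 * real m - 1)" "y \<notin> \<rat>"
proof -
  have "1 / (2 * real m + 1) < 1 / (2 * real m)" "1 / (2 * real m) < 1 / (2 * real m - 1)"
    using assms(2) by (auto intro!: divide_strict_left_mono)
  with assms(1) show lower: "1 / (2 * real m + 1) < y" and "y < 1 / (2 * real m - 1)" "y \<notin> \<rat>"
    unfolding plus_branch_def minus_branch_def by auto
  have "0 < 1 / (2 * real m + 1)" by simp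
  with lower show "0 < y" by linarith
qed

lemma branches_subset_Omega:
  assumes "1 \<le> a" "a \<le> m"
  shows "plus_branch m \<union> minus_branch m \<subseteq> Omega a"
proof
  fix y assume y: "y \<in> plus_branch m \<union> minus_branch m"
  have "1 / (2 * real m - 1) \<le> 1 / (2 * real a - 1)"
    using assms by (intro divide_left_mono) auto
  with branch_bounds[OF y] assms show "y \<in> Omega a"
    unfolding Omega_def by auto
qed

lemma branches_disjoint_Omega:
  assumes "1 \<le> m" "m < a"
  shows "(plus_branch m \<union> minus_branch m) \<inter> Omega a = {}"
proof -
  have "1 / (2 * real a - 1) \<le> 1 / (2 * real m + 1)"
    using assms by (intro divide_left_mono) auto
  with branch_bounds[OF _ assms(1)] show ?thesis
    unfolding Omega_def by fastforce
qed

lemma digit_0_eq_iff: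
  assumes "y \<in> Omega 1"
  shows "digit 0 y = 2 * real m \<longleftrightarrow> m \<ge> 1 \<and> y \<in> plus_branch m \<union> minus_branch m"
proof -
  have branch_digit: "digit 0 y = 2 * real k" if "k \<ge> 1" "y \<in> plus_branch k \<union> minus_branch k" for k
    using that sengel_plus_branch(1) sengel_minus_branch(1) by (auto simp: digit_def)
  obtain k where k: "k \<ge> 1" "y \<in> plus_branch k \<union> minus_branch k"
    using Omega_1_cover[OF assms] .
  show ?thesis
  proof
    assume "digit 0 y = 2 * real m"
    with branch_digit[OF k] have "k = m" by simp
    with k show "m \<ge> 1 \<and> y \<in> plus_branch m \<union> minus_branch m" by simp
  qed (use branch_digit in blast)
qed

lemma first_digit_bounds:
  assumes "y \<in> Omega 1"
  shows "2 \<le> digit 0 y" "1 / (digit 0 y + 1) < y" "y < 1 / (digit 0 y - 1)"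
proof -
  obtain m where m: "m \<ge> 1" "y \<in> plus_branch m \<union> minus_branch m"
    using Omega_1_cover[OF assms] .
  then have "digit 0 y = 2 * real m"
    using digit_0_eq_iff[OF assms] by blast
  with m branch_bounds[OF m(2,1)] show "2 \<le> digit 0 y" "1 / (digit 0 y + 1) < y" "y < 1 / (digit 0 y - 1)"
    by simp_all
qed

lemma sengel_T_Omega_1:
  assumes "y \<in> Omega 1"
  shows "sengel_T y \<in> Omega 1"
proof -
  obtain m where m: "m \<ge> 1" "y \<in> plus_branch m \<union> minus_branch m"
    using Omega_1_cover[OF assms] .
  then have "sengel_T y \<in> Omega m \<union> Omega (Suc m)"
    using sengel_plus_branch(2) sengel_minus_branch(2) plus_branch_iff minus_branch_iff by auto
  then show ?thesis
    using Omega_antimono[of 1 m] Omega_antimono[of 1 "Suc m"] m(1) by auto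
qed

lemma digit_Suc: "digit (Suc n) y = digit n (sengel_T y)"
  by (simp add: digit_def funpow_swap1)

lemma digit_ge_2:
  assumes "y \<in> Omega 1"
  shows "2 \<le> digit n y"
proof -
  have "(sengel_T ^^ n) y \<in> Omega 1"
  proof (induction n)
    case (Suc n)
    then show ?case
      using sengel_T_Omega_1 by (metis funpow.simps(2) o_apply)
  qed (use assms in simp)
  then show ?thesis
    using first_digit_bounds(1) by (simp add: digit_def)
qed

section \<open>Lebesgue measure on first-digit cylinders\<close>

lemma sengel_T_measurable [measurable]: "sengel_T \<in> borel_measurable borel"
  unfolding sengel_T_def[abs_def] by measurable

lemma sengel_d1_measurable [measurable]: "(\<lambda>x. real_of_int (sengel_d1 x)) \<in> borel_measurable borel"
  unfolding sengel_d1_def[abs_def] by measurable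

lemma digit_measurable [measurable]: "digit n \<in> borel_measurable borel"
proof -
  have "sengel_T ^^ n \<in> borel_measurable borel"
    by (induction n) (auto intro: measurable_comp)
  then show ?thesis
    unfolding digit_def[abs_def] by measurable
qed

lemma first_digit_cylinder_vimage:
  assumes m: "m \<ge> 1"
  shows "{y \<in> Omega 1. digit 0 y = 2 * real m \<and> sengel_T y \<in> S}
    = (\<lambda>y. - 1 + 2 * real m * y) -` (Omega m \<inter> S) \<union> (\<lambda>y. 1 + (- 2 * real m) * y) -` (Omega (Suc m) \<inter> S)"
proof -
  have plus: "y \<in> plus_branch m \<longleftrightarrow> - 1 + 2 * real m * y \<in> Omega m" for y
    using plus_branch_iff[OF m, of y] by simp
  have minus: "y \<in> minus_branch m \<longleftrightarrow> 1 + (- 2 * real m) * y \<in> Omega (Suc m)" for y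
    using minus_branch_iff[OF m, of y] by simp
  have branches: "plus_branch m \<union> minus_branch m \<subseteq> Omega 1"
    using branches_subset_Omega[of 1 m] m by simp
  show ?thesis
  proof (intro set_eqI iffI)
    fix y assume "y \<in> {y \<in> Omega 1. digit 0 y = 2 * real m \<and> sengel_T y \<in> S}"
    then have "y \<in> plus_branch m \<union> minus_branch m" "sengel_T y \<in> S"
      using digit_0_eq_iff by auto
    then show "y \<in> (\<lambda>y. - 1 + 2 * real m * y) -` (Omega m \<inter> S) \<union> (\<lambda>y. 1 + (- 2 * real m) * y) -` (Omega (Suc m) \<inter> S)"
      using sengel_plus_branch(2)[OF m] sengel_minus_branch(2)[OF m] plus minus by auto
  next
    fix y assume "y \<in> (\<lambda>y. - 1 + 2 * real m * y) -` (Omega m \<inter> S) \<union> (\<lambda>y. 1 + (- 2 * real m) * y) -` (Omega (Suc m) \<inter> S)"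
    then consider "y \<in> plus_branch m" "- 1 + 2 * real m * y \<in> S" | "y \<in> minus_branch m" "1 + (- 2 * real m) * y \<in> S"
      using plus minus by auto
    then show "y \<in> {y \<in> Omega 1. digit 0 y = 2 * real m \<and> sengel_T y \<in> S}"
    proof cases
      case 1
      then show ?thesis
        using branches digit_0_eq_iff[of y m] sengel_plus_branch(2)[OF m] m by auto
    next
      case 2
      then show ?thesis
        using branches digit_0_eq_iff[of y m] sengel_minus_branch(2)[OF m] m by auto
    qed
  qed
qed

lemma emeasure_first_digit_cylinder:
  assumes m: "m \<ge> 1" and S: "S \<in> sets borel"
  shows "emeasure lebesgue {y \<in> Omega 1. digit 0 y = 2 * real m \<and> sengel_T y \<in> S}
    = ennreal (1 / (2 * real m)) * (emeasure lebesgue (Omega m \<inter> S) + emeasure lebesgue (Omega (Suc m) \<inter> S))"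
proof -
  define P where "P = (\<lambda>y. - 1 + 2 * real m * y) -` (Omega m \<inter> S)"
  define M where "M = (\<lambda>y. 1 + (- 2 * real m) * y) -` (Omega (Suc m) \<inter> S)"
  have "P \<in> sets borel" "M \<in> sets borel"
    unfolding P_def M_def using S by (auto intro!: measurable_sets_borel)
  moreover have "P \<inter> M = {}"
    using plus_branch_iff[OF m] minus_branch_iff[OF m]
    by (auto simp: P_def M_def plus_branch_def minus_branch_def)
  ultimately have "emeasure lebesgue (P \<union> M) = emeasure lebesgue P + emeasure lebesgue M"
    by (intro plus_emeasure[symmetric]) auto
  moreover have "emeasure lebesgue P = ennreal (1 / (2 * real m)) * emeasure lebesgue (Omega m \<inter> S)"
    unfolding P_def using m by (subst emeasure_lebesgue_affine_vimage) auto
  moreover have "emeasure lebesgue M = ennreal (1 / (2 * real m)) * emeasure lebesgue (Omega (Suc m) \<inter> S)"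
    unfolding M_def using m by (subst emeasure_lebesgue_affine_vimage) auto
  ultimately show ?thesis
    unfolding first_digit_cylinder_vimage[OF m] P_def[symmetric] M_def[symmetric]
    by (simp add: distrib_left)
qed

lemma Omega_first_digit_cylinder:
  assumes "a \<ge> 1"
  shows "{y \<in> Omega a. digit 0 y = 2 * real m \<and> Q y}
    = (if a \<le> m then {y \<in> Omega 1. digit 0 y = 2 * real m \<and> Q y} else {})"
proof -
  have "y \<in> Omega a \<longleftrightarrow> a \<le> m" if "y \<in> Omega 1" "digit 0 y = 2 * real m" for y
    using that assms digit_0_eq_iff branches_subset_Omega[of a m] branches_disjoint_Omega[of m a]
    by (cases "a \<le> m") auto
  then show ?thesis
    using Omega_antimono[OF order.refl assms] by auto
qed

lemma Omega_digit_restrict: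
  assumes "a \<ge> 1"
  shows "{y \<in> Omega a. C (digit 0 y) \<and> Q (digit 0 y) y} \<inter> {y. digit 0 y = 2 * real m}
    = (if a \<le> m \<and> C (2 * real m) then {y \<in> Omega 1. digit 0 y = 2 * real m \<and> Q (2 * real m) y} else {})"
proof -
  have "{y \<in> Omega a. C (digit 0 y) \<and> Q (digit 0 y) y} \<inter> {y. digit 0 y = 2 * real m}
    = {y \<in> Omega a. digit 0 y = 2 * real m \<and> C (2 * real m) \<and> Q (2 * real m) y}"
    by auto
  then show ?thesis
    by (cases "C (2 * real m)") (simp_all only: Omega_first_digit_cylinder[OF assms], simp_all)
qed

lemma Omega_1_digit_cover: "Omega 1 \<subseteq> (\<Union>m. {y. digit 0 y = 2 * real m})"
proof
  fix y assume y: "y \<in> Omega 1"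
  then obtain m where "m \<ge> 1" "y \<in> plus_branch m \<union> minus_branch m"
    by (rule Omega_1_cover)
  with y have "digit 0 y = 2 * real m"
    using digit_0_eq_iff by blast
  then show "y \<in> (\<Union>m. {y. digit 0 y = 2 * real m})"
    by blast
qed

lemma first_digit_cylinder_borel:
  assumes "X \<in> sets borel"
  shows "{y \<in> Omega 1. digit 0 y = 2 * real m \<and> sengel_T y \<in> X} \<in> sets borel"
proof -
  have "{y \<in> Omega 1. digit 0 y = 2 * real m \<and> sengel_T y \<in> X} = Omega 1 \<inter> digit 0 -` {2 * real m} \<inter> sengel_T -` X"
    by auto
  moreover have "digit 0 -` {2 * real m} \<in> sets borel"
    by (rule measurable_sets_borel[OF digit_measurable]) simp
  moreover have "sengel_T -` X \<in> sets borel"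
    by (rule measurable_sets_borel[OF sengel_T_measurable assms])
  ultimately show ?thesis
    by simp
qed

lemma emeasure_first_digit_cylinder_le:
  fixes c :: ennreal
  assumes m: "m \<ge> 1" and S: "S \<in> sets borel"
    and bound: "\<And>b. b \<in> {m, Suc m} \<Longrightarrow> emeasure lebesgue (Omega b \<inter> S) \<le> emeasure lebesgue (Omega b) * c"
  shows "emeasure lebesgue {y \<in> Omega 1. digit 0 y = 2 * real m \<and> sengel_T y \<in> S}
    \<le> emeasure lebesgue {y \<in> Omega 1. digit 0 y = 2 * real m} * c"
proof -
  have "emeasure lebesgue {y \<in> Omega 1. digit 0 y = 2 * real m \<and> sengel_T y \<in> S}
    = ennreal (1 / (2 * real m)) * (emeasure lebesgue (Omega m \<inter> S) + emeasure lebesgue (Omega (Suc m) \<inter> S))"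
    by (rule emeasure_first_digit_cylinder[OF m S])
  also have "\<dots> \<le> ennreal (1 / (2 * real m)) * (emeasure lebesgue (Omega m) * c + emeasure lebesgue (Omega (Suc m)) * c)"
    using bound by (intro mult_left_mono add_mono) auto
  also have "\<dots> = ennreal (1 / (2 * real m))
      * (emeasure lebesgue (Omega m \<inter> UNIV) + emeasure lebesgue (Omega (Suc m) \<inter> UNIV)) * c"
    by (simp add: algebra_simps)
  also have "\<dots> = emeasure lebesgue {y \<in> Omega 1. digit 0 y = 2 * real m} * c"
    using emeasure_first_digit_cylinder[OF m, of UNIV] by simp
  finally show ?thesis .
qed

lemma emeasure_Omega_shift_le:
  fixes C :: "real \<Rightarrow> bool" and S :: "real \<Rightarrow> real set" and c :: ennreal
  assumes a: "a \<ge> 1" and S: "\<And>m. S (2 * real m) \<in> sets borel"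
    and bound: "\<And>m b. a \<le> m \<Longrightarrow> b \<in> {m, Suc m} \<Longrightarrow> C (2 * real m) \<Longrightarrow>
      emeasure lebesgue (Omega b \<inter> S (2 * real m)) \<le> emeasure lebesgue (Omega b) * c"
  shows "emeasure lebesgue {y \<in> Omega a. C (digit 0 y) \<and> sengel_T y \<in> S (digit 0 y)}
    \<le> emeasure lebesgue {y \<in> Omega a. C (digit 0 y)} * c"
proof (rule emeasure_le_mult_by_partition)
  define P where "P m = {y. digit 0 y = 2 * real m}" for m
  show "disjoint_family P"
    by (auto simp: disjoint_family_on_def P_def)
  have "Omega a \<subseteq> (\<Union>m. P m)"
    using Omega_antimono[OF order.refl a] Omega_1_digit_cover unfolding P_def by blast
  then show "{y \<in> Omega a. C (digit 0 y) \<and> sengel_T y \<in> S (digit 0 y)} \<subseteq> (\<Union>m. P m)"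
    "{y \<in> Omega a. C (digit 0 y)} \<subseteq> (\<Union>m. P m)"
    by auto
  fix m
  have pieceS: "{y \<in> Omega a. C (digit 0 y) \<and> sengel_T y \<in> S (digit 0 y)} \<inter> P m
      = (if a \<le> m \<and> C (2 * real m) then {y \<in> Omega 1. digit 0 y = 2 * real m \<and> sengel_T y \<in> S (2 * real m)} else {})"
    unfolding P_def by (rule Omega_digit_restrict[OF a])
  have pieceU: "{y \<in> Omega a. C (digit 0 y)} \<inter> P m
      = (if a \<le> m \<and> C (2 * real m) then {y \<in> Omega 1. digit 0 y = 2 * real m} else {})"
    using Omega_digit_restrict[OF a, of C "\<lambda>_ _. True" m] unfolding P_def by simp
  show "{y \<in> Omega a. C (digit 0 y) \<and> sengel_T y \<in> S (digit 0 y)} \<inter> P m \<in> sets lebesgue"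
    "{y \<in> Omega a. C (digit 0 y)} \<inter> P m \<in> sets lebesgue"
    unfolding pieceS pieceU using first_digit_cylinder_borel[OF S] first_digit_cylinder_borel[of UNIV]
    by auto
  show "emeasure lebesgue ({y \<in> Omega a. C (digit 0 y) \<and> sengel_T y \<in> S (digit 0 y)} \<inter> P m)
    \<le> emeasure lebesgue ({y \<in> Omega a. C (digit 0 y)} \<inter> P m) * c"
  proof (cases "a \<le> m \<and> C (2 * real m)")
    case True
    then have "m \<ge> 1"
      using a by auto
    with True show ?thesis
      unfolding pieceS pieceU if_P[OF True] using bound S by (intro emeasure_first_digit_cylinder_le) auto
  next
    case False
    show ?thesis
      unfolding pieceS if_not_P[OF False] emeasure_empty by (rule zero_le)
  qed
qed

section \<open>Estimates for a single digit\<close>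

lemma emeasure_first_digit_ge:
  assumes "a \<ge> 1" "1 < t"
  shows "emeasure lebesgue {y \<in> Omega a. t \<le> digit 0 y} \<le> ennreal (1 / (t - 1))"
proof -
  have "{y \<in> Omega a. t \<le> digit 0 y} \<subseteq> {0<..<1 / (t - 1)}"
  proof
    fix y assume y: "y \<in> {y \<in> Omega a. t \<le> digit 0 y}"
    then have y1: "y \<in> Omega 1"
      using Omega_antimono[OF order.refl assms(1)] by auto
    have "y < 1 / (digit 0 y - 1)"
      using first_digit_bounds(3)[OF y1] .
    also have "\<dots> \<le> 1 / (t - 1)"
    proof (rule divide_left_mono)
      show "t - 1 \<le> digit 0 y - 1" "0 < (digit 0 y - 1) * (t - 1)"
        using y assms(2) by auto
    qed simp
    finally show "y \<in> {0<..<1 / (t - 1)}"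
      using y1 by (simp add: Omega_def)
  qed
  then have "emeasure lebesgue {y \<in> Omega a. t \<le> digit 0 y} \<le> emeasure lebesgue {0<..<1 / (t - 1)}"
    by (rule emeasure_mono) simp
  then show ?thesis
    by (simp add: emeasure_lebesgue_Ioo)
qed

lemma emeasure_first_digit_less:
  assumes "a \<ge> 1"
  shows "emeasure lebesgue {y \<in> Omega a. digit 0 y < t} \<le> ennreal (1 / (2 * real a - 1) - 1 / (t + 1))"
proof -
  have "{y \<in> Omega a. digit 0 y < t} \<subseteq> {1 / (t + 1)<..<1 / (2 * real a - 1)}"
  proof
    fix y assume y: "y \<in> {y \<in> Omega a. digit 0 y < t}"
    then have y1: "y \<in> Omega 1"
      using Omega_antimono[OF order.refl assms] by auto
    have "1 / (t + 1) < 1 / (digit 0 y + 1)"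
      using y first_digit_bounds(1)[OF y1] by (intro divide_strict_left_mono) auto
    also have "\<dots> < y"
      using first_digit_bounds(2)[OF y1] .
    finally show "y \<in> {1 / (t + 1)<..<1 / (2 * real a - 1)}"
      using y by (simp add: Omega_def)
  qed
  then have "emeasure lebesgue {y \<in> Omega a. digit 0 y < t} \<le> emeasure lebesgue {1 / (t + 1)<..<1 / (2 * real a - 1)}"
    by (rule emeasure_mono) simp
  then show ?thesis
    by (simp add: emeasure_lebesgue_Ioo)
qed

text \<open>
  The invariant of the orbit: after the digit \<open>d = 2m\<close> the image lies in Omega m or
  Omega (m + 1) (\<open>compatible_digit\<close>), and the starting point, preceded by no digit, is
  encoded as \<open>d = 1\<close>, \<open>a = 1\<close>.
\<close>

definition compatible :: "real \<Rightarrow> nat \<Rightarrow> bool" where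
  "compatible d a \<longleftrightarrow> 1 \<le> a \<and> 1 \<le> d \<and> d \<le> 4 * real a - 2 \<and> 2 * real a \<le> d + 2"

lemma compatible_1_1: "compatible 1 1"
  by (simp add: compatible_def)

lemma compatible_digit: "m \<ge> 1 \<Longrightarrow> b \<in> {m, Suc m} \<Longrightarrow> compatible (2 * real m) b"
  by (auto simp: compatible_def)

lemma emeasure_first_digit_large:
  assumes "compatible d a" "p > 0"
  shows "emeasure lebesgue {y \<in> Omega a. p * d \<le> digit 0 y} \<le> emeasure lebesgue (Omega a) * ennreal (4 / p)"
proof -
  define A where "A = 2 * real a - 1"
  have a: "a \<ge> 1" and A: "A \<ge> 1" "A \<le> d + 1" and d: "d \<ge> 1"
    using assms(1) by (auto simp: compatible_def A_def)
  have Omega_a: "emeasure lebesgue (Omega a) = ennreal (1 / A)"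
    using emeasure_Omega[OF a] by (simp add: A_def)
  have "emeasure lebesgue {y \<in> Omega a. p * d \<le> digit 0 y} \<le> ennreal (1 / A * (4 / p))"
  proof (cases "p \<le> 4")
    case True
    have "emeasure lebesgue {y \<in> Omega a. p * d \<le> digit 0 y} \<le> emeasure lebesgue (Omega a)"
      by (rule emeasure_mono) auto
    also have "\<dots> \<le> ennreal (1 / A * (4 / p))"
      using True A assms(2) by (simp add: Omega_a field_simps)
    finally show ?thesis .
  next
    case False
    define t where "t = p * d"
    have "p \<le> t"
      using d assms(2) by (simp add: t_def)
    with False have "4 < t"
      by (simp add: algebra_simps)
    have "emeasure lebesgue {y \<in> Omega a. p * d \<le> digit 0 y} \<le> ennreal (1 / (t - 1))"
      unfolding t_def[symmetric] using \<open>4 < t\<close> by (intro emeasure_first_digit_ge[OF a]) simp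
    also have "\<dots> \<le> ennreal (1 / A * (4 / p))"
    proof (rule ennreal_leI)
      have "p * A \<le> p * (d + 1)"
        using A assms(2) by (intro mult_left_mono) auto
      also have "\<dots> = t + p"
        by (simp add: t_def algebra_simps)
      also have "\<dots> \<le> 4 * (t - 1)"
        using False \<open>p \<le> t\<close> by (simp add: algebra_simps)
      finally have "p * A \<le> 4 * (t - 1)" .
      moreover have "0 < p * A" "0 < t - 1"
        using A assms(2) \<open>4 < t\<close> by simp_all
      ultimately show "1 / (t - 1) \<le> 1 / A * (4 / p)"
        by (simp add: field_simps)
    qed
    finally show ?thesis .
  qed
  also have "\<dots> = emeasure lebesgue (Omega a) * ennreal (4 / p)"
    unfolding Omega_a by (rule ennreal_mult) (use A assms(2) in auto)
  finally show ?thesis .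
qed

lemma emeasure_first_digit_small:
  assumes "compatible d a" "p > 0"
  shows "emeasure lebesgue {y \<in> Omega a. \<not> p * d \<le> digit 0 y}
    \<le> emeasure lebesgue (Omega a) * ennreal (1 - min 1 (1 / p) / 4)"
proof -
  define A where "A = 2 * real a - 1"
  define q where "q = min 1 (1 / p)"
  have a: "a \<ge> 1" and A: "A \<ge> 1" "d \<le> 2 * A" and d: "d \<ge> 1"
    using assms(1) by (auto simp: compatible_def A_def)
  have q: "0 \<le> q" "q \<le> 1" "0 \<le> q * p" "q * p \<le> 1"
    using assms(2) by (auto simp: q_def min_def field_simps)
  have Omega_a: "emeasure lebesgue (Omega a) = ennreal (1 / A)"
    using emeasure_Omega[OF a] by (simp add: A_def)
  have "{y \<in> Omega a. \<not> p * d \<le> digit 0 y} = {y \<in> Omega a. digit 0 y < p * d}"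
    by auto
  then have "emeasure lebesgue {y \<in> Omega a. \<not> p * d \<le> digit 0 y} \<le> ennreal (1 / A - 1 / (p * d + 1))"
    using emeasure_first_digit_less[OF a, of "p * d"] by (simp add: A_def)
  also have "\<dots> \<le> ennreal (1 / A * (1 - q / 4))"
  proof (rule ennreal_leI)
    have "q * (p * d + 1) = (q * p) * d + q"
      by (simp add: algebra_simps)
    also have "\<dots> \<le> d + 1"
      using q d by (intro add_mono mult_left_le_one_le) auto
    also have "\<dots> \<le> 4 * A"
      using A d by linarith
    finally have "q * (p * d + 1) \<le> 4 * A" .
    moreover have "0 < p * d + 1"
      using assms(2) d by (simp add: add_pos_pos)
    ultimately have "q / (4 * A) \<le> 1 / (p * d + 1)"
      using A by (simp add: field_simps)
    moreover have "1 / A * (1 - q / 4) = 1 / A - q / (4 * A)"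
      using A by (simp add: field_simps)
    ultimately show "1 / A - 1 / (p * d + 1) \<le> 1 / A * (1 - q / 4)"
      by linarith
  qed
  also have "\<dots> = emeasure lebesgue (Omega a) * ennreal (1 - q / 4)"
    unfolding Omega_a by (rule ennreal_mult) (use A q in auto)
  finally show ?thesis
    unfolding q_def .
qed

section \<open>Large ratios of consecutive digits\<close>

text \<open>
  \<open>large_ratio \<psi> d n y\<close> says \<open>R_(n+1)(y) \<ge> \<psi> n\<close>, where \<open>d\<close> stands in for a digit
  preceding the first one; the expansion itself takes \<open>d = 1\<close>, so that \<open>R_1 = d_1\<close>.
\<close>

definition large_ratio :: "(nat \<Rightarrow> real) \<Rightarrow> real \<Rightarrow> nat \<Rightarrow> real \<Rightarrow> bool" where
  "large_ratio \<psi> d n y \<longleftrightarrow> \<psi> n * (if n = 0 then d else digit (n - 1) y) \<le> digit n y"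

lemma large_ratio_borel: "{y. large_ratio \<psi> d n y} \<in> sets borel"
proof (cases n)
  case 0
  then have "{y. large_ratio \<psi> d n y} = digit 0 -` {\<psi> 0 * d..}"
    by (auto simp: large_ratio_def)
  also have "\<dots> \<in> sets borel"
    by (rule measurable_sets_borel[OF digit_measurable]) simp
  finally show ?thesis .
next
  case (Suc k)
  then have "{y. large_ratio \<psi> d n y} = {y \<in> space borel. \<psi> n * digit k y \<le> digit n y}"
    by (auto simp: large_ratio_def)
  also have "\<dots> \<in> sets borel"
    by (intro borel_measurable_le borel_measurable_times measurable_const digit_measurable) simp
  finally show ?thesis .
qed

lemma large_ratio_0: "large_ratio \<psi> d 0 y \<longleftrightarrow> \<psi> 0 * d \<le> digit 0 y"
  by (simp add: large_ratio_def)

lemma large_ratio_Suc: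
  "large_ratio \<psi> d (Suc n) y \<longleftrightarrow> large_ratio (\<lambda>k. \<psi> (Suc k)) (digit 0 y) n (sengel_T y)"
  by (cases n) (simp_all add: large_ratio_def digit_Suc)

lemma emeasure_large_ratio_le:
  assumes "compatible d a" "\<psi> n > 0"
  shows "emeasure lebesgue (Omega a \<inter> {y. large_ratio \<psi> d n y})
    \<le> emeasure lebesgue (Omega a) * ennreal (4 / \<psi> n)"
  using assms
proof (induction n arbitrary: \<psi> d a)
  case 0
  have "Omega a \<inter> {y. large_ratio \<psi> d 0 y} = {y \<in> Omega a. \<psi> 0 * d \<le> digit 0 y}"
    by (auto simp: large_ratio_0)
  then show ?case
    using emeasure_first_digit_large[OF 0] by simp
next
  case (Suc n)
  have "a \<ge> 1"
    using Suc.prems(1) by (simp add: compatible_def)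
  have "Omega a \<inter> {y. large_ratio \<psi> d (Suc n) y}
    = {y \<in> Omega a. True \<and> sengel_T y \<in> {z. large_ratio (\<lambda>k. \<psi> (Suc k)) (digit 0 y) n z}}"
    by (auto simp: large_ratio_Suc)
  also have "emeasure lebesgue \<dots> \<le> emeasure lebesgue {y \<in> Omega a. True} * ennreal (4 / \<psi> (Suc n))"
  proof (rule emeasure_Omega_shift_le[OF \<open>a \<ge> 1\<close> large_ratio_borel])
    fix m b assume "a \<le> m" "b \<in> {m, Suc m}"
    then have "compatible (2 * real m) b"
      using \<open>a \<ge> 1\<close> by (intro compatible_digit) auto
    then show "emeasure lebesgue (Omega b \<inter> {z. large_ratio (\<lambda>k. \<psi> (Suc k)) (2 * real m) n z})
      \<le> emeasure lebesgue (Omega b) * ennreal (4 / \<psi> (Suc n))"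
      using Suc.IH[of "2 * real m" b "\<lambda>k. \<psi> (Suc k)"] Suc.prems(2) by simp
  qed
  finally show ?case
    by simp
qed

lemma avoid_large_ratio_borel: "{y. \<forall>n<j. n \<in> I \<longrightarrow> \<not> large_ratio \<psi> d n y} \<in> sets borel"
proof -
  have "{y. \<forall>n<j. n \<in> I \<longrightarrow> \<not> large_ratio \<psi> d n y}
    = space borel - (\<Union>n\<in>{..<j} \<inter> I. {y. large_ratio \<psi> d n y})"
    by auto
  also have "\<dots> \<in> sets borel"
    using large_ratio_borel by (intro sets.compl_sets sets.finite_UN) auto
  finally show ?thesis .
qed

definition miss_bound :: "(nat \<Rightarrow> real) \<Rightarrow> nat set \<Rightarrow> nat \<Rightarrow> real" where
  "miss_bound \<psi> I n = (if n \<in> I then 1 - min 1 (1 / \<psi> n) / 4 else 1)"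

lemma miss_bound_nonneg: "0 \<le> miss_bound \<psi> I n"
  by (simp add: miss_bound_def min_le_iff_disj)

lemma miss_bound_shift: "miss_bound (\<lambda>k. \<psi> (Suc k)) (Suc -` I) n = miss_bound \<psi> I (Suc n)"
  by (simp add: miss_bound_def)

lemma emeasure_first_digit_miss:
  assumes "compatible d a" "\<psi> 0 > 0"
  shows "emeasure lebesgue {y \<in> Omega a. 0 \<in> I \<longrightarrow> \<not> \<psi> 0 * d \<le> digit 0 y}
    \<le> emeasure lebesgue (Omega a) * ennreal (miss_bound \<psi> I 0)"
proof (cases "0 \<in> I")
  case True
  then show ?thesis
    using emeasure_first_digit_small[OF assms] by (simp add: miss_bound_def)
next
  case False
  then show ?thesis
    by (simp add: miss_bound_def)
qed

lemma emeasure_avoid_large_ratio_le: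
  assumes "compatible d a" "\<And>n. \<psi> n > 0"
  shows "emeasure lebesgue (Omega a \<inter> {y. \<forall>n<j. n \<in> I \<longrightarrow> \<not> large_ratio \<psi> d n y})
    \<le> emeasure lebesgue (Omega a) * ennreal (\<Prod>n<j. miss_bound \<psi> I n)"
  using assms
proof (induction j arbitrary: \<psi> d a I)
  case 0
  then show ?case by simp
next
  case (Suc j)
  define C where "C e \<longleftrightarrow> (0 \<in> I \<longrightarrow> \<not> \<psi> 0 * d \<le> e)" for e
  define S where "S e = {z. \<forall>n<j. n \<in> Suc -` I \<longrightarrow> \<not> large_ratio (\<lambda>k. \<psi> (Suc k)) e n z}" for e
  have "a \<ge> 1"
    using Suc.prems(1) by (simp add: compatible_def)
  have "(\<forall>n<Suc j. n \<in> I \<longrightarrow> \<not> large_ratio \<psi> d n y) \<longleftrightarrow> C (digit 0 y) \<and> sengel_T y \<in> S (digit 0 y)" for y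
    unfolding C_def S_def by (auto simp: less_Suc_eq_0_disj large_ratio_0 large_ratio_Suc)
  then have "Omega a \<inter> {y. \<forall>n<Suc j. n \<in> I \<longrightarrow> \<not> large_ratio \<psi> d n y}
    = {y \<in> Omega a. C (digit 0 y) \<and> sengel_T y \<in> S (digit 0 y)}"
    by auto
  also have "emeasure lebesgue \<dots>
    \<le> emeasure lebesgue {y \<in> Omega a. C (digit 0 y)} * ennreal (\<Prod>n<j. miss_bound \<psi> I (Suc n))"
  proof (rule emeasure_Omega_shift_le[OF \<open>a \<ge> 1\<close>])
    show "S (2 * real m) \<in> sets borel" for m
      unfolding S_def by (rule avoid_large_ratio_borel)
    fix m b assume "a \<le> m" "b \<in> {m, Suc m}"
    then have "compatible (2 * real m) b"
      using \<open>a \<ge> 1\<close> by (intro compatible_digit) auto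
    then have "emeasure lebesgue (Omega b \<inter> S (2 * real m))
      \<le> emeasure lebesgue (Omega b) * ennreal (\<Prod>n<j. miss_bound (\<lambda>k. \<psi> (Suc k)) (Suc -` I) n)"
      unfolding S_def by (rule Suc.IH) (rule Suc.prems(2))
    then show "emeasure lebesgue (Omega b \<inter> S (2 * real m))
      \<le> emeasure lebesgue (Omega b) * ennreal (\<Prod>n<j. miss_bound \<psi> I (Suc n))"
      by (simp only: miss_bound_shift)
  qed
  also have "\<dots> \<le> emeasure lebesgue (Omega a) * ennreal (miss_bound \<psi> I 0) * ennreal (\<Prod>n<j. miss_bound \<psi> I (Suc n))"
    unfolding C_def by (rule mult_right_mono[OF emeasure_first_digit_miss[OF Suc.prems(1) Suc.prems(2)]]) simp
  also have "\<dots> = emeasure lebesgue (Omega a) * ennreal (miss_bound \<psi> I 0 * (\<Prod>n<j. miss_bound \<psi> I (Suc n)))"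
    by (simp add: ennreal_mult miss_bound_nonneg prod_nonneg mult.assoc)
  also have "miss_bound \<psi> I 0 * (\<Prod>n<j. miss_bound \<psi> I (Suc n)) = (\<Prod>n<Suc j. miss_bound \<psi> I n)"
    by (rule prod.lessThan_Suc_shift[symmetric])
  finally show ?case .
qed

lemma digit_eq_sengel_d: "digit n x = real_of_int (sengel_d (Suc n) x)"
  by (simp add: digit_def sengel_d_def)

lemma sengel_R_Suc_ge_iff:
  assumes "x \<in> Omega 1"
  shows "\<phi> (Suc n) \<le> sengel_R (Suc n) x \<longleftrightarrow> large_ratio (\<lambda>k. \<phi> (Suc k)) 1 n x"
proof (cases n)
  case 0
  then show ?thesis
    by (simp add: sengel_R_def large_ratio_0 digit_eq_sengel_d)
next
  case (Suc k)
  have "sengel_R (Suc n) x = digit n x / digit k x"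
    unfolding sengel_R_def Suc digit_eq_sengel_d by simp
  moreover have "0 < digit k x"
    using digit_ge_2[OF assms, of k] by simp
  ultimately show ?thesis
    by (simp add: large_ratio_def Suc pos_le_divide_eq)
qed

lemma Omega_1_eq: "Omega 1 = {0<..<1} - \<rat>"
  by (simp add: Omega_def)

lemma sengel_Rset_eq_limsup:
  "sengel_Rset \<phi> = limsup (\<lambda>n. Omega 1 \<inter> {x. large_ratio (\<lambda>k. \<phi> (Suc k)) 1 n x})"
proof (intro set_eqI)
  fix x
  show "x \<in> sengel_Rset \<phi> \<longleftrightarrow> x \<in> limsup (\<lambda>n. Omega 1 \<inter> {x. large_ratio (\<lambda>k. \<phi> (Suc k)) 1 n x})"
  proof (cases "x \<in> Omega 1")
    case True
    have "{n. n \<ge> 1 \<and> \<phi> n \<le> sengel_R n x} = Suc ` {n. large_ratio (\<lambda>k. \<phi> (Suc k)) 1 n x}"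
    proof (intro set_eqI iffI)
      fix n assume "n \<in> {n. n \<ge> 1 \<and> \<phi> n \<le> sengel_R n x}"
      then show "n \<in> Suc ` {n. large_ratio (\<lambda>k. \<phi> (Suc k)) 1 n x}"
        using sengel_R_Suc_ge_iff[OF True, of \<phi> "n - 1"] by (auto simp: image_iff intro!: bexI[of _ "n - 1"])
    qed (use sengel_R_Suc_ge_iff[OF True] in auto)
    then have "infinite {n. n \<ge> 1 \<and> \<phi> n \<le> sengel_R n x} \<longleftrightarrow> infinite {n. large_ratio (\<lambda>k. \<phi> (Suc k)) 1 n x}"
      by (simp add: finite_image_iff)
    with True show ?thesis
      by (simp add: sengel_Rset_def Omega_1_eq[symmetric] mem_limsup_iff_infinite)
  next
    case False
    then show ?thesis
      by (simp add: sengel_Rset_def Omega_1_eq[symmetric] mem_limsup_iff_infinite)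
  qed
qed

section \<open>The convergent and the divergent case\<close>

lemma sengel_Rset_null_if_summable:
  fixes \<phi> :: "nat \<Rightarrow> real"
  assumes pos: "\<And>n. n \<ge> 1 \<Longrightarrow> \<phi> n > 0" and sum: "summable (\<lambda>n. 1 / \<phi> (Suc n))"
  shows "sengel_Rset \<phi> \<in> null_sets lebesgue"
proof -
  define E where "E n = Omega 1 \<inter> {x. large_ratio (\<lambda>k. \<phi> (Suc k)) 1 n x}" for n
  have "E n \<in> sets borel" for n
    unfolding E_def by (intro sets.Int Omega_borel large_ratio_borel)
  then have E_sets: "E n \<in> sets lebesgue" for n
    by (rule borel_imp_sets_lebesgue)
  have "emeasure lebesgue (E n) \<le> emeasure lebesgue (Omega 1) * ennreal (4 / \<phi> (Suc n))" for n
    unfolding E_def by (rule emeasure_large_ratio_le[OF compatible_1_1]) (rule pos, simp)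
  then have E_le: "emeasure lebesgue (E n) \<le> ennreal (4 / \<phi> (Suc n))" for n
    unfolding emeasure_Omega_1 by simp
  have E_fin: "emeasure lebesgue (E n) < \<infinity>" for n
    using le_less_trans[OF E_le ennreal_less_top] by (simp add: infinity_ennreal_def)
  have "norm (measure lebesgue (E n)) \<le> 4 * (1 / \<phi> (Suc n))" for n
  proof -
    have "0 \<le> 4 / \<phi> (Suc n)"
      using pos[of "Suc n"] by simp
    then have "measure lebesgue (E n) \<le> 4 / \<phi> (Suc n)"
      unfolding measure_def by (rule enn2real_leI[OF _ E_le])
    then show ?thesis
      by simp
  qed
  then have "summable (\<lambda>n. measure lebesgue (E n))"
    by (intro summable_comparison_test'[OF summable_mult[OF sum]])
  then have "limsup E \<in> null_sets lebesgue"
    by (intro borel_cantelli_limsup1 E_sets E_fin)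
  then show ?thesis
    unfolding sengel_Rset_eq_limsup E_def .
qed

lemma exists_prod_miss_bound_less:
  assumes pos: "\<And>n. 0 < \<psi> n" and not_sum: "\<not> summable (\<lambda>n. 1 / \<psi> n)" and e: "e > 0"
  shows "\<exists>j. (\<Prod>n<j. miss_bound \<psi> {N..} n) < e"
proof -
  define r where "r n = (if N \<le> n then min 1 (1 / \<psi> n) / 4 else 0)" for n
  have r: "0 \<le> r n" "r n \<le> 1" for n
    using pos[of n] by (auto simp: r_def min_le_iff_disj)
  have "eventually (\<lambda>n. r n = min 1 (1 / \<psi> n) / 4) sequentially"
    unfolding r_def eventually_sequentially by auto
  then have "summable r \<longleftrightarrow> summable (\<lambda>n. min 1 (1 / \<psi> n) / 4)"
    by (rule summable_cong)
  also have "\<dots> \<longleftrightarrow> summable (\<lambda>n. 1 / \<psi> n)"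
    using summable_min_1_iff[of "\<lambda>n. 1 / \<psi> n"] pos by (simp add: less_imp_le)
  finally have "\<not> summable r"
    using not_sum by simp
  have "(\<Prod>n<j. miss_bound \<psi> {N..} n) = (\<Prod>n<j. 1 - r n)" for j
    by (rule prod.cong) (auto simp: r_def miss_bound_def)
  with exists_prod_one_minus_less[OF r \<open>\<not> summable r\<close> e] show ?thesis
    by simp
qed

lemma null_sets_never_large_ratio:
  assumes pos: "\<And>n. 0 < \<psi> n" and not_sum: "\<not> summable (\<lambda>n. 1 / \<psi> n)"
  shows "Omega 1 \<inter> {x. \<forall>n\<ge>N. \<not> large_ratio \<psi> 1 n x} \<in> null_sets lebesgue"
proof -
  define D where "D = Omega 1 \<inter> {x. \<forall>n\<ge>N. \<not> large_ratio \<psi> 1 n x}"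
  have "{x. \<forall>n\<ge>N. \<not> large_ratio \<psi> 1 n x} = space borel - (\<Union>n\<in>{N..}. {x. large_ratio \<psi> 1 n x})"
    by auto
  also have "\<dots> \<in> sets borel"
    using large_ratio_borel by (intro sets.compl_sets sets.countable_UN') auto
  finally have "D \<in> sets borel"
    unfolding D_def by (intro sets.Int Omega_borel)
  then have D_sets: "D \<in> sets lebesgue"
    by (rule borel_imp_sets_lebesgue)
  have D_le: "emeasure lebesgue D \<le> ennreal (\<Prod>n<j. miss_bound \<psi> {N..} n)" for j
  proof -
    have sub: "D \<subseteq> Omega 1 \<inter> {x. \<forall>n<j. n \<in> {N..} \<longrightarrow> \<not> large_ratio \<psi> 1 n x}"
      by (auto simp: D_def)
    have "Omega 1 \<inter> {x. \<forall>n<j. n \<in> {N..} \<longrightarrow> \<not> large_ratio \<psi> 1 n x} \<in> sets borel"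
      by (intro sets.Int Omega_borel avoid_large_ratio_borel)
    then have "emeasure lebesgue D
      \<le> emeasure lebesgue (Omega 1 \<inter> {x. \<forall>n<j. n \<in> {N..} \<longrightarrow> \<not> large_ratio \<psi> 1 n x})"
      by (intro emeasure_mono[OF sub] borel_imp_sets_lebesgue)
    also have "\<dots> \<le> emeasure lebesgue (Omega 1) * ennreal (\<Prod>n<j. miss_bound \<psi> {N..} n)"
      by (rule emeasure_avoid_large_ratio_le[OF compatible_1_1 pos])
    finally show ?thesis
      unfolding emeasure_Omega_1 by simp
  qed
  have "emeasure lebesgue D \<le> 0"
  proof (rule ennreal_le_epsilon)
    fix e :: real assume "0 < e"
    then obtain j where "(\<Prod>n<j. miss_bound \<psi> {N..} n) < e"
      using exists_prod_miss_bound_less[OF pos not_sum] by blast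
    then have "ennreal (\<Prod>n<j. miss_bound \<psi> {N..} n) \<le> ennreal e"
      by (intro ennreal_leI) simp
    with D_le[of j] show "emeasure lebesgue D \<le> 0 + ennreal e"
      by simp
  qed
  with D_sets have "D \<in> null_sets lebesgue"
    by (simp add: null_sets_def)
  then show ?thesis
    unfolding D_def .
qed

lemma sengel_Rset_full_if_not_summable:
  fixes \<phi> :: "nat \<Rightarrow> real"
  assumes pos: "\<And>n. n \<ge> 1 \<Longrightarrow> \<phi> n > 0" and not_sum: "\<not> summable (\<lambda>n. 1 / \<phi> (Suc n))"
  shows "sengel_Rset \<phi> \<in> sets lebesgue" "emeasure lebesgue (sengel_Rset \<phi>) = 1"
proof -
  define \<psi> where "\<psi> = (\<lambda>n. \<phi> (Suc n))"
  define D where "D N = Omega 1 \<inter> {x. \<forall>n\<ge>N. \<not> large_ratio \<psi> 1 n x}" for N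
  have \<psi>_pos: "0 < \<psi> n" for n
    using pos by (simp add: \<psi>_def)
  have "\<not> summable (\<lambda>n. 1 / \<psi> n)"
    using not_sum by (simp add: \<psi>_def)
  then have "D N \<in> null_sets lebesgue" for N
    unfolding D_def by (rule null_sets_never_large_ratio[OF \<psi>_pos])
  then have null: "(\<Union>N. D N) \<in> null_sets lebesgue"
    by (rule null_sets_UN)
  have "x \<in> sengel_Rset \<phi> \<longleftrightarrow> x \<in> Omega 1 - (\<Union>N. D N)" for x
    unfolding sengel_Rset_eq_limsup \<psi>_def[symmetric] mem_limsup_iff_infinite infinite_nat_iff_unbounded_le
    by (auto simp: D_def)
  then have Rset_eq: "sengel_Rset \<phi> = Omega 1 - (\<Union>N. D N)"
    by blast
  have "Omega 1 \<in> sets lebesgue"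
    using Omega_borel by (rule borel_imp_sets_lebesgue)
  with null show "sengel_Rset \<phi> \<in> sets lebesgue"
    unfolding Rset_eq by (auto dest: null_setsD2)
  show "emeasure lebesgue (sengel_Rset \<phi>) = 1"
    unfolding Rset_eq emeasure_Diff_null_set[OF null \<open>Omega 1 \<in> sets lebesgue\<close>] by (rule emeasure_Omega_1)
qed

theorem theorem1p3:
  fixes phi :: "nat \<Rightarrow> real"
  assumes pos: "\<And>n. n \<ge> 1 \<Longrightarrow> phi n > 0"
  shows "(\<not> summable (\<lambda>n. 1 / phi (Suc n)) \<longrightarrow>
            sengel_Rset phi \<in> sets lebesgue \<and> emeasure lebesgue (sengel_Rset phi) = 1)
       \<and> (summable (\<lambda>n. 1 / phi (Suc n)) \<longrightarrow>
            sengel_Rset phi \<in> sets lebesgue \<and> emeasure lebesgue (sengel_Rset phi) = 0)"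
proof (rule conjI; rule impI)
  assume "\<not> summable (\<lambda>n. 1 / phi (Suc n))"
  then show "sengel_Rset phi \<in> sets lebesgue \<and> emeasure lebesgue (sengel_Rset phi) = 1"
    using sengel_Rset_full_if_not_summable[of phi, OF pos] by blast
next
  assume "summable (\<lambda>n. 1 / phi (Suc n))"
  then have "sengel_Rset phi \<in> null_sets lebesgue"
    using pos sengel_Rset_null_if_summable by blast
  then show "sengel_Rset phi \<in> sets lebesgue \<and> emeasure lebesgue (sengel_Rset phi) = 0"
    using null_setsD1 null_setsD2 by blast
qed

end
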